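(* Let $f$ be a pdf supported on $[-\tfrac14,\tfrac14]$. For every integer $j\ne0$, $$|\hat f(j)|^2\le\frac{\|f*f\|_\infty}{\pi}\sin\Big(\frac{\pi}{\|f*f\|_\infty}\Big).$$
   Context: $\mathbb{T}=\mathbb{R}/\mathbb{Z}$; integrals are over $\mathbb{T}$. $\hat f(j)=\int f(x)e^{-2\pi ijx}\,dx$, $f*f(c)=\int f(x)f(c-x)\,dx$, $\|\cdot\|_\infty$ the essential supremum. A pdf is a nonnegative function in $L^2(\mathbb{T})$ with integral 1; $[-\tfrac14,\tfrac14]$ is regarded as a subset of $\mathbb{T}$. *)

theory Defs
  imports "HOL-Analysis.Analysis" "HOL-Probability.Essential_Supremum"
begin

text \<open>Functions on T = R/Z are represented as 1-periodic functions real => real;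
  integrals over T are integrals over the fundamental domain [0,1].\<close>

definition torus_periodic :: "(real \<Rightarrow> real) \<Rightarrow> bool" where
  "torus_periodic f \<longleftrightarrow> (\<forall>x. f (x + 1) = f x)"

definition T_fourier :: "(real \<Rightarrow> real) \<Rightarrow> int \<Rightarrow> complex" where
  "T_fourier f j = (LINT x:{0..1}|lborel. complex_of_real (f x) * cis (- 2 * pi * real_of_int j * x))"

definition T_conv :: "(real \<Rightarrow> real) \<Rightarrow> (real \<Rightarrow> real) \<Rightarrow> real \<Rightarrow> real" where
  "T_conv f g c = (LINT x:{0..1}|lborel. f x * g (c - x))"

definition T_sup_norm :: "(real \<Rightarrow> real) \<Rightarrow> ereal" where
  "T_sup_norm h = esssup (restrict_space lborel {0..1}) (\<lambda>x. ereal \<bar>h x\<bar>)"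

definition T_pdf :: "(real \<Rightarrow> real) \<Rightarrow> bool" where
  "T_pdf f \<longleftrightarrow> torus_periodic f \<and> f \<in> borel_measurable lborel
     \<and> (AE x in lborel. 0 \<le> f x)
     \<and> set_integrable lborel {0..1} (\<lambda>x. (f x)\<^sup>2)
     \<and> set_integrable lborel {0..1} f
     \<and> (LINT x:{0..1}|lborel. f x) = 1"

text \<open>Support in [-1/4,1/4] as a subset of T: f vanishes a.e. on the rest of the
  fundamental domain [-1/2,1/2] (hence, by periodicity, a.e. off [-1/4,1/4] + Z).\<close>
definition T_supported_quarter :: "(real \<Rightarrow> real) \<Rightarrow> bool" where
  "T_supported_quarter f \<longleftrightarrow> (AE x in lborel. (1/4 < \<bar>x\<bar> \<and> \<bar>x\<bar> \<le> 1/2) \<longrightarrow> f x = 0)"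

end

theory Submission
  imports Defs
begin

text \<open>Put \<open>h = f * f\<close> and \<open>M = \<parallel>h\<parallel>\<^sub>\<infinity>\<close>. Then \<open>h\<close> is a density on the torus with
  \<open>0 \<le> h \<le> M\<close> (so \<open>M \<ge> 1\<close>) and \<open>T_fourier h j = (T_fourier f j)\<^sup>2\<close>. After a rotation,
  \<open>|T_fourier h j| = \<integral> h(c) cos(2\<pi>(s + jc)) dc\<close>, and by the bathtub principle this is largest
  when \<open>h\<close> has density \<open>M\<close> where the cosine is largest and vanishes elsewhere: with \<open>a = \<pi>/M\<close>
  and \<open>t = cos a\<close> one has pointwise \<open>h cos \<le> M max (cos - t) 0 + t h\<close>, and integrating gives
  \<open>M (sin a - a cos a)/\<pi> + cos a = (M/\<pi>) sin(\<pi>/M)\<close>.\<close>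

section \<open>Periodic functions on the real line\<close>

lemma set_integral_real_affine:
  fixes g :: "real \<Rightarrow> 'a::{banach, second_countable_topology}"
  assumes "c \<noteq> 0"
  shows "(LINT x:{x. t + c * x \<in> B}|lborel. g (t + c * x)) = (LINT y:B|lborel. g y) /\<^sub>R \<bar>c\<bar>"
  using lborel_integral_real_affine[OF assms, of "\<lambda>y. indicator B y *\<^sub>R g y" t] assms
  by (simp add: set_lebesgue_integral_def indicator_def)

lemma set_integrable_real_affine_iff:
  fixes g :: "real \<Rightarrow> 'a::{banach, second_countable_topology}"
  assumes "c \<noteq> 0"
  shows "set_integrable lborel {x. t + c * x \<in> B} (\<lambda>x. g (t + c * x)) \<longleftrightarrow> set_integrable lborel B g"
  using lborel_integrable_real_affine_iff[OF assms, of "\<lambda>y. indicator B y *\<^sub>R g y" t]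
  by (simp add: set_integrable_def indicator_def)

lemma AE_lborel_real_affine:
  fixes P :: "real \<Rightarrow> bool"
  assumes "c \<noteq> 0" and [measurable]: "Measurable.pred borel P" and "AE y in lborel. P y"
  shows "AE x in lborel. P (t + c * x)"
proof -
  have "AE y in density (distr lborel borel (\<lambda>x. t + c * x)) (\<lambda>_. ennreal \<bar>c\<bar>). P y"
    using assms(3) by (subst (asm) lborel_real_affine[OF assms(1), of t]) simp
  then have "AE y in distr lborel borel (\<lambda>x. t + c * x). P y"
    using assms(1) by (subst (asm) AE_density) auto
  then show ?thesis
    by (subst (asm) AE_distr_iff) auto
qed

lemma periodic_add_of_int:
  assumes per: "\<And>x. g (x + 1) = g x"
  shows "g (x + of_int k) = g x"
proof -
  have nat: "g (y + of_nat n) = g y" for y n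
  proof (induction n)
    case (Suc n)
    then show ?case using per[of "y + of_nat n"] by (simp add: ac_simps)
  qed simp
  show ?thesis
  proof (cases "k \<ge> 0")
    case True
    then show ?thesis using nat[of x "nat k"] by simp
  next
    case False
    then show ?thesis using nat[of "x + of_int k" "nat (- k)"] by simp
  qed
qed

lemma set_integral_Icc_translate:
  fixes g :: "real \<Rightarrow> 'a::{banach, second_countable_topology}"
  shows "(LINT x:{a..b}|lborel. g (x + s)) = (LINT y:{a + s..b + s}|lborel. g y)"
proof -
  have "{x. s + 1 * x \<in> {a + s..b + s}} = {a..b}" by auto
  then show ?thesis using set_integral_real_affine[of 1 s "{a + s..b + s}" g] by (simp add: add.commute)
qed

lemma periodic_set_integrable_Icc:
  fixes g :: "real \<Rightarrow> 'a::{banach, second_countable_topology}"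
  assumes per: "\<And>x. g (x + 1) = g x" and int: "set_integrable lborel {0..1} g"
  shows "set_integrable lborel {a..b} g"
proof -
  have unit: "set_integrable lborel {of_int k..of_int k + 1} g" for k
  proof -
    have "{x. of_int k + 1 * x \<in> {of_int k..of_int k + 1}} = {0..1::real}" by auto
    moreover have "g (of_int k + 1 * x) = g x" for x
      using periodic_add_of_int[of g, OF per, of x k] by (simp add: add.commute)
    ultimately show ?thesis
      using set_integrable_real_affine_iff[of 1 "of_int k" "{of_int k..of_int k + 1}" g] int by simp
  qed
  have block: "set_integrable lborel {of_int k..of_int k + real n} g" for k n
  proof (induction n)
    case (Suc n)
    have "{of_int k..of_int k + real (Suc n)} = {of_int k..of_int k + real n} \<union> {of_int (k + n)..of_int (k + n) + 1}"
      by auto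
    then show ?case using Suc unit[of "k + n"] by (auto intro: set_integrable_Un)
  qed (use unit[of k] in \<open>auto intro: set_integrable_subset\<close>)
  define n where "n = nat (\<lceil>b\<rceil> - \<lfloor>a\<rfloor>)"
  have "{a..b} \<subseteq> {of_int \<lfloor>a\<rfloor>..of_int \<lfloor>a\<rfloor> + real n}"
    unfolding n_def by (auto; linarith)
  then show ?thesis by (intro set_integrable_subset[OF block]) auto
qed

lemma periodic_set_integral_Icc_unit:
  fixes g :: "real \<Rightarrow> 'a::{banach, second_countable_topology}"
  assumes per: "\<And>x. g (x + 1) = g x" and int: "set_integrable lborel {0..1} g"
  shows "(LINT y:{a..a + 1}|lborel. g y) = (LINT y:{0..1}|lborel. g y)"
proof -
  note int_Icc = periodic_set_integrable_Icc[of g, OF per int]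
  define r where "r = a - of_int \<lfloor>a\<rfloor>"
  have r: "0 \<le> r" "r \<le> 1" unfolding r_def by linarith+
  have "(LINT y:{a..a + 1}|lborel. g y) = (LINT x:{r..r + 1}|lborel. g (x + of_int \<lfloor>a\<rfloor>))"
    by (simp add: set_integral_Icc_translate r_def)
  also have "\<dots> = (LINT y:{r..r + 1}|lborel. g y)"
    by (simp add: periodic_add_of_int[of g, OF per])
  also have "\<dots> = (LINT y:{r..1}|lborel. g y) + (LINT y:{1..r + 1}|lborel. g y)"
  proof -
    have "{r..r + 1} = {r..1} \<union> {1..r + 1}" using r by auto
    moreover have "AE x in lborel. \<not> (x \<in> {r..1} \<and> x \<in> {1..r + 1})"
      using AE_lborel_singleton[of 1] by eventually_elim (use r in auto)
    ultimately show ?thesis by (simp add: set_integral_Un_AE int_Icc)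
  qed
  also have "(LINT y:{1..r + 1}|lborel. g y) = (LINT y:{0..r}|lborel. g y)"
    using set_integral_Icc_translate[of 0 r g 1] by (simp add: per add.commute)
  also have "(LINT y:{r..1}|lborel. g y) + (LINT y:{0..r}|lborel. g y) = (LINT y:{0..1}|lborel. g y)"
  proof -
    have "{0..1} = {0..r} \<union> {r..1}" using r by auto
    moreover have "AE x in lborel. \<not> (x \<in> {0..r} \<and> x \<in> {r..1})"
      using AE_lborel_singleton[of r] by eventually_elim auto
    ultimately show ?thesis by (simp add: set_integral_Un_AE int_Icc add.commute)
  qed
  finally show ?thesis .
qed

lemma periodic_set_integral_Icc_multiple:
  fixes g :: "real \<Rightarrow> 'a::{banach, second_countable_topology}"
  assumes per: "\<And>x. g (x + 1) = g x" and int: "set_integrable lborel {0..1} g"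
  shows "(LINT y:{a..a + real n}|lborel. g y) = real n *\<^sub>R (LINT y:{0..1}|lborel. g y)"
proof (induction n)
  case 0
  have "AE x in lborel. indicator {a} x *\<^sub>R g x = 0"
    using AE_lborel_singleton[of a] by eventually_elim simp
  then show ?case by (simp add: set_lebesgue_integral_def integral_eq_zero_AE)
next
  case (Suc n)
  have "{a..a + real (Suc n)} = {a..a + real n} \<union> {a + real n..a + real n + 1}" by auto
  moreover have "AE x in lborel. \<not> (x \<in> {a..a + real n} \<and> x \<in> {a + real n..a + real n + 1})"
    using AE_lborel_singleton[of "a + real n"] by eventually_elim auto
  ultimately show ?case
    using Suc periodic_set_integral_Icc_unit[of g, OF per int, of "a + real n"]
    by (simp add: set_integral_Un_AE periodic_set_integrable_Icc[of g, OF per int] scaleR_add_left)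
qed

lemma periodic_set_integral_affine:
  fixes g :: "real \<Rightarrow> 'a::{banach, second_countable_topology}"
  assumes per: "\<And>x. g (x + 1) = g x" and int: "set_integrable lborel {0..1} g" and "j \<noteq> 0"
  shows "set_integrable lborel {0..1} (\<lambda>x. g (s + of_int j * x))"
    and "(LINT x:{0..1}|lborel. g (s + of_int j * x)) = (LINT y:{0..1}|lborel. g y)"
proof -
  define a where "a = (if j > 0 then s else s + of_int j)"
  define n where "n = nat \<bar>j\<bar>"
  have j: "of_int j \<noteq> (0::real)" "\<bar>of_int j\<bar> = real n" "real n \<noteq> 0"
    using \<open>j \<noteq> 0\<close> by (auto simp: n_def)
  have pre: "{x. s + of_int j * x \<in> {a..a + real n}} = {0..1}"
    using \<open>j \<noteq> 0\<close> by (auto simp: a_def n_def zero_le_mult_iff mult_le_0_iff)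
  show "set_integrable lborel {0..1} (\<lambda>x. g (s + of_int j * x))"
    using set_integrable_real_affine_iff[OF j(1), of s "{a..a + real n}" g] pre
      periodic_set_integrable_Icc[of g, OF per int] by simp
  show "(LINT x:{0..1}|lborel. g (s + of_int j * x)) = (LINT y:{0..1}|lborel. g y)"
    using set_integral_real_affine[OF j(1), of s "{a..a + real n}" g] pre j(2,3)
      periodic_set_integral_Icc_multiple[of g, OF per int, of a n] by simp
qed

lemma periodic_set_integral_shift:
  fixes g :: "real \<Rightarrow> 'a::{banach, second_countable_topology}"
  assumes per: "\<And>x. g (x + 1) = g x" and int: "set_integrable lborel {0..1} g"
  shows "set_integrable lborel {0..1} (\<lambda>x. g (x + s))"
    and "(LINT x:{0..1}|lborel. g (x + s)) = (LINT y:{0..1}|lborel. g y)"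
  using periodic_set_integral_affine[of g, OF per int, of 1 s] by (simp_all add: add.commute)

lemma periodic_set_integral_reflect:
  fixes g :: "real \<Rightarrow> 'a::{banach, second_countable_topology}"
  assumes per: "\<And>x. g (x + 1) = g x" and int: "set_integrable lborel {0..1} g"
  shows "set_integrable lborel {0..1} (\<lambda>x. g (s - x))"
    and "(LINT x:{0..1}|lborel. g (s - x)) = (LINT y:{0..1}|lborel. g y)"
  using periodic_set_integral_affine[of g, OF per int, of "-1" s] by simp_all

section \<open>The convolution theorem\<close>

abbreviation fourier_char :: "int \<Rightarrow> real \<Rightarrow> complex" where
  "fourier_char j x \<equiv> cis (- 2 * pi * real_of_int j * x)"

lemma borel_measurable_cis [measurable]: "cis \<in> borel_measurable borel"
  by (intro borel_measurable_continuous_onI continuous_intros)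

lemma fourier_char_periodic: "fourier_char j (x + 1) = fourier_char j x"
proof -
  have "fourier_char j (x + 1) = fourier_char j x * cis (2 * pi * real_of_int (- j))"
    by (simp add: cis_mult algebra_simps)
  also have "cis (2 * pi * real_of_int (- j)) = 1"
    by (rule cis_multiple_2pi) simp
  finally show ?thesis by simp
qed

lemma fourier_char_diff: "fourier_char j c = fourier_char j x * fourier_char j (c - x)"
  by (simp add: cis_mult algebra_simps)

lemma set_integrable_fourier_char_mult:
  assumes [measurable]: "f \<in> borel_measurable borel" and "set_integrable lborel {0..1} f"
  shows "set_integrable lborel {0..1} (\<lambda>x. complex_of_real (f x) * fourier_char j x)"
proof (rule set_integrable_bound[OF assms(2)])
  show "set_borel_measurable lborel {0..1} (\<lambda>x. complex_of_real (f x) * fourier_char j x)"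
    unfolding set_borel_measurable_def by measurable
qed (simp add: norm_mult)

lemma convolution_kernel_integrable:
  fixes F G :: "real \<Rightarrow> 'a::{real_normed_div_algebra, banach, second_countable_topology}"
  assumes perG: "\<And>x. G (x + 1) = G x"
    and [measurable]: "F \<in> borel_measurable borel" "G \<in> borel_measurable borel"
    and intF: "set_integrable lborel {0..1} F" and intG: "set_integrable lborel {0..1} G"
  shows "integrable (lborel \<Otimes>\<^sub>M lborel)
    (\<lambda>(x, c). (indicator {0..1} x * indicator {0..1} c) *\<^sub>R (F x * G (c - x)))"
proof (rule lborel_pair.Fubini_integrable)
  show "(\<lambda>(x, c). (indicator {0..1} x * indicator {0..1} c) *\<^sub>R (F x * G (c - x)))
      \<in> borel_measurable (lborel \<Otimes>\<^sub>M lborel)"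
    by measurable
  have normG: "set_integrable lborel {0..1} (\<lambda>y. norm (G y))"
    using intG by (rule set_integrable_norm)
  have "(\<integral>c. norm ((indicator {0..1} x * indicator {0..1} c) *\<^sub>R (F x * G (c - x))) \<partial>lborel)
      = (indicator {0..1} x * norm (F x)) * (LINT y:{0..1}|lborel. norm (G y))" for x
  proof -
    have "(\<integral>c. norm ((indicator {0..1} x * indicator {0..1} c) *\<^sub>R (F x * G (c - x))) \<partial>lborel)
        = (\<integral>c. (indicator {0..1} x * norm (F x)) * (indicator {0..1} c * norm (G (c - x))) \<partial>lborel)"
      by (simp add: norm_mult ac_simps)
    also have "\<dots> = (indicator {0..1} x * norm (F x)) * (LINT c:{0..1}|lborel. norm (G (c - x)))"
      by (simp add: set_lebesgue_integral_def)
    also have "(LINT c:{0..1}|lborel. norm (G (c - x))) = (LINT y:{0..1}|lborel. norm (G y))"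
      using periodic_set_integral_shift(2)[of "\<lambda>y. norm (G y)", OF _ normG, of "- x"] by (simp add: perG)
    finally show ?thesis .
  qed
  moreover have "integrable lborel (\<lambda>x. (indicator {0..1} x * norm (F x)) * (LINT y:{0..1}|lborel. norm (G y)))"
    using set_integrable_norm[OF intF] unfolding set_integrable_def by simp
  ultimately show "integrable lborel (\<lambda>x. \<integral>c. norm (case_prod
      (\<lambda>x c. (indicator {0..1} x * indicator {0..1} c) *\<^sub>R (F x * G (c - x))) (x, c)) \<partial>lborel)"
    by simp
  have "integrable lborel (\<lambda>c. (indicator {0..1} x * indicator {0..1} c) *\<^sub>R (F x * G (c - x)))" for x
  proof -
    have "integrable lborel (\<lambda>c. (indicator {0..1} x *\<^sub>R F x) * (indicator {0..1} c *\<^sub>R G (c - x)))"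
      using periodic_set_integral_shift(1)[of G, OF perG intG, of "- x"]
      unfolding set_integrable_def by (intro integrable_mult_right) simp
    then show ?thesis by (simp add: ac_simps)
  qed
  then show "AE x in lborel. integrable lborel (\<lambda>c. case_prod
      (\<lambda>x c. (indicator {0..1} x * indicator {0..1} c) *\<^sub>R (F x * G (c - x))) (x, c))"
    by (simp add: mult.assoc mult.left_commute)
qed

lemma T_fourier_T_conv:
  assumes perf: "torus_periodic f" and perg: "torus_periodic g"
    and [measurable]: "f \<in> borel_measurable borel" "g \<in> borel_measurable borel"
    and intf: "set_integrable lborel {0..1} f" and intg: "set_integrable lborel {0..1} g"
  shows "T_fourier (T_conv f g) j = T_fourier f j * T_fourier g j"
proof -
  define F where "F x = complex_of_real (f x) * fourier_char j x" for x
  define G where "G x = complex_of_real (g x) * fourier_char j x" for x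
  define k where "k x c = (indicator {0..1} x * indicator {0..1} c) *\<^sub>R (F x * G (c - x))" for x c
  have [measurable]: "F \<in> borel_measurable borel" "G \<in> borel_measurable borel"
    unfolding F_def G_def by measurable
  have perG: "G (x + 1) = G x" for x
    using perg fourier_char_periodic[of j x] by (simp add: G_def torus_periodic_def)
  have intG: "set_integrable lborel {0..1} G"
    unfolding G_def by (rule set_integrable_fourier_char_mult) fact+
  have intF: "set_integrable lborel {0..1} F"
    unfolding F_def by (rule set_integrable_fourier_char_mult) fact+
  have inner_x: "(\<integral>x. k x c \<partial>lborel)
      = indicator {0..1} c *\<^sub>R (complex_of_real (T_conv f g c) * fourier_char j c)" for c
  proof -
    have "k x c = complex_of_real (indicator {0..1} x * (f x * g (c - x)))
        * (indicator {0..1} c *\<^sub>R fourier_char j c)" for x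
      by (subst fourier_char_diff[of j c x]) (simp add: k_def F_def G_def scaleR_conv_of_real ac_simps)
    then have "(\<integral>x. k x c \<partial>lborel) = complex_of_real (\<integral>x. indicator {0..1} x * (f x * g (c - x)) \<partial>lborel)
        * (indicator {0..1} c *\<^sub>R fourier_char j c)"
      by (simp only: integral_mult_left_zero integral_complex_of_real)
    then show ?thesis
      by (simp add: T_conv_def set_lebesgue_integral_def)
  qed
  have inner_c: "(\<integral>c. k x c \<partial>lborel) = (indicator {0..1} x *\<^sub>R F x) * T_fourier g j" for x
  proof -
    have "(\<integral>c. k x c \<partial>lborel) = (indicator {0..1} x *\<^sub>R F x) * (LINT c:{0..1}|lborel. G (c - x))"
      by (simp add: k_def set_lebesgue_integral_def ac_simps flip: integral_mult_right_zero)
    also have "(LINT c:{0..1}|lborel. G (c - x)) = T_fourier g j"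
      using periodic_set_integral_shift(2)[of G, OF perG intG, of "- x"]
      by (simp add: T_fourier_def G_def)
    finally show ?thesis .
  qed
  have "T_fourier (T_conv f g) j = (\<integral>c. (\<integral>x. k x c \<partial>lborel) \<partial>lborel)"
    by (simp add: inner_x T_fourier_def set_lebesgue_integral_def)
  also have "\<dots> = (\<integral>x. (\<integral>c. k x c \<partial>lborel) \<partial>lborel)"
    using convolution_kernel_integrable[of G F, OF perG _ _ intF intG]
    by (intro lborel_pair.Fubini_integral) (simp add: k_def)
  also have "\<dots> = T_fourier f j * T_fourier g j"
    unfolding inner_c integral_mult_left_zero
    by (simp add: T_fourier_def F_def set_lebesgue_integral_def)
  finally show ?thesis .
qed

lemma borel_measurable_T_conv [measurable]:
  assumes [measurable]: "f \<in> borel_measurable borel" "g \<in> borel_measurable borel"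
  shows "T_conv f g \<in> borel_measurable borel"
  unfolding T_conv_def set_lebesgue_integral_def by measurable

lemma T_conv_nonneg:
  assumes [measurable]: "g \<in> borel_measurable borel"
    and "AE x in lborel. 0 \<le> f x" and "AE x in lborel. 0 \<le> g x"
  shows "0 \<le> T_conv f g c"
proof -
  have "AE x in lborel. 0 \<le> g (c + -1 * x)"
    by (rule AE_lborel_real_affine) (use assms in auto)
  with assms(2) have "AE x in lborel. 0 \<le> indicator {0..1} x * (f x * g (c - x))"
    by eventually_elim simp
  then show ?thesis
    unfolding T_conv_def set_lebesgue_integral_def by (simp add: integral_nonneg_AE)
qed

lemma abs_T_conv_self_le:
  assumes per: "torus_periodic f" and [measurable]: "f \<in> borel_measurable borel"
    and sq: "set_integrable lborel {0..1} (\<lambda>x. (f x)\<^sup>2)"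
  shows "\<bar>T_conv f f c\<bar> \<le> (LINT x:{0..1}|lborel. (f x)\<^sup>2)"
proof -
  have am_gm: "\<bar>a * b\<bar> \<le> (a\<^sup>2 + b\<^sup>2) / 2" for a b :: real
    using sum_squares_bound[of "\<bar>a\<bar>" "\<bar>b\<bar>"] by (simp add: abs_mult)
  have "(f (x + 1))\<^sup>2 = (f x)\<^sup>2" for x
    using per by (simp add: torus_periodic_def)
  note sq_reflect = periodic_set_integral_reflect[of "\<lambda>x. (f x)\<^sup>2", OF this sq, of c]
  have bound_int: "set_integrable lborel {0..1} (\<lambda>x. ((f x)\<^sup>2 + (f (c - x))\<^sup>2) / 2)"
    using sq sq_reflect(1) by (intro set_integrable_divide set_integral_add)
  have prod_int: "set_integrable lborel {0..1} (\<lambda>x. f x * f (c - x))"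
  proof (rule set_integrable_bound[OF bound_int])
    show "set_borel_measurable lborel {0..1} (\<lambda>x. f x * f (c - x))"
      unfolding set_borel_measurable_def by measurable
  qed (use am_gm in auto)
  have "\<bar>T_conv f f c\<bar> \<le> (LINT x:{0..1}|lborel. \<bar>f x * f (c - x)\<bar>)"
    unfolding T_conv_def using set_integral_norm_bound[OF prod_int] by simp
  also have "\<dots> \<le> (LINT x:{0..1}|lborel. ((f x)\<^sup>2 + (f (c - x))\<^sup>2) / 2)"
    using prod_int am_gm by (intro set_integral_mono bound_int) (auto simp: set_integrable_abs)
  also have "\<dots> = (LINT x:{0..1}|lborel. (f x)\<^sup>2)"
    using sq sq_reflect by simp
  finally show ?thesis .
qed

section \<open>The bathtub bound\<close>

lemma norm_eq_Re_cis_Arg: "cmod z = Re (cis (- Arg z) * z)"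
proof -
  have "cis (- Arg z) * z = complex_of_real (cmod z) * (cis (- Arg z) * cis (Arg z))"
    by (subst (1) rcis_cmod_Arg[of z, symmetric]) (simp add: rcis_def)
  then show ?thesis by (simp add: cis_mult)
qed

lemma cmod_T_fourier_eq_integral_cos:
  assumes [measurable]: "h \<in> borel_measurable borel" and hi: "set_integrable lborel {0..1} h"
  obtains s where "cmod (T_fourier h j) = (LINT c:{0..1}|lborel. h c * cos (2 * pi * (s + of_int j * c)))"
proof
  define s where "s = Arg (T_fourier h j) / (2 * pi)"
  define u where "u c = cis (- Arg (T_fourier h j)) * (complex_of_real (h c) * fourier_char j c)" for c
  have pointwise: "Re (indicator {0..1} c *\<^sub>R u c)
      = indicator {0..1} c *\<^sub>R (h c * cos (2 * pi * (s + of_int j * c)))" for c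
  proof -
    have "cis (- Arg (T_fourier h j)) * fourier_char j c = cis (- (2 * pi * (s + of_int j * c)))"
      by (simp add: cis_mult s_def algebra_simps)
    then show ?thesis by (simp add: u_def mult.left_commute)
  qed
  have "set_integrable lborel {0..1} u"
    unfolding u_def by (intro set_integrable_mult_right set_integrable_fourier_char_mult assms)
  then have "Re (LINT c:{0..1}|lborel. u c) = (LINT c:{0..1}|lborel. h c * cos (2 * pi * (s + of_int j * c)))"
    unfolding set_integrable_def set_lebesgue_integral_def by (simp only: integral_Re[symmetric] pointwise)
  moreover have "cis (- Arg (T_fourier h j)) * T_fourier h j = (LINT c:{0..1}|lborel. u c)"
    unfolding T_fourier_def u_def by (rule set_integral_mult_right[symmetric])
  ultimately show "cmod (T_fourier h j) = (LINT c:{0..1}|lborel. h c * cos (2 * pi * (s + of_int j * c)))"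
    by (simp only: norm_eq_Re_cis_Arg)
qed

definition cos_excess :: "real \<Rightarrow> real \<Rightarrow> real" where
  "cos_excess t y = max (cos (2 * pi * y) - t) 0"

lemma continuous_on_cos_excess: "continuous_on A (cos_excess t)"
  unfolding cos_excess_def by (intro continuous_intros)

lemma cos_excess_periodic: "cos_excess t (y + 1) = cos_excess t y"
proof -
  have "cos (2 * pi * (y + 1)) = cos (2 * pi * y + 2 * pi)" by (simp add: algebra_simps)
  then show ?thesis unfolding cos_excess_def by simp
qed

lemma set_integrable_cos_excess: "set_integrable lborel {a..b} (cos_excess t)"
  by (rule borel_integrable_atLeastAtMost' continuous_on_cos_excess)+

lemma set_integral_cos_excess:
  assumes a: "0 < a" "a \<le> pi"
  shows "(LINT y:{0..1}|lborel. cos_excess (cos a) y) = (sin a - a * cos a) / pi"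
proof -
  define b where "b = a / (2 * pi)"
  have b: "0 < b" "b \<le> 1/2" using a by (auto simp: b_def field_simps)
  have "(LINT y:{0..1}|lborel. cos_excess (cos a) y) = (LINT y:{- 1/2..1/2}|lborel. cos_excess (cos a) y)"
    using periodic_set_integral_Icc_unit[OF cos_excess_periodic set_integrable_cos_excess, of "- 1/2"]
    by simp
  also have "\<dots> = (\<integral>y. indicator {-b..b} y *\<^sub>R (cos (2 * pi * y) - cos a) \<partial>lborel)"
    unfolding set_lebesgue_integral_def
  proof (rule Bochner_Integration.integral_cong[OF refl])
    fix y :: real
    show "indicator {- 1/2..1/2} y *\<^sub>R cos_excess (cos a) y
        = indicator {-b..b} y *\<^sub>R (cos (2 * pi * y) - cos a)"
    proof (cases "\<bar>y\<bar> \<le> 1/2")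
      case True
      have "cos a \<le> cos (2 * pi * y) \<longleftrightarrow> cos a \<le> cos (2 * pi * \<bar>y\<bar>)"
        by (simp add: abs_if)
      also have "\<dots> \<longleftrightarrow> 2 * pi * \<bar>y\<bar> \<le> a"
        using True a by (intro cos_mono_le_eq) auto
      also have "\<dots> \<longleftrightarrow> \<bar>y\<bar> \<le> b"
        unfolding b_def by (auto simp: field_simps)
      also have "\<dots> \<longleftrightarrow> y \<in> {-b..b}"
        by auto
      finally show ?thesis using True unfolding cos_excess_def by (auto simp: indicator_def)
    qed (use b in \<open>auto simp: indicator_def\<close>)
  qed
  also have "\<dots> = (sin (2 * pi * b) / (2 * pi) - cos a * b) - (sin (2 * pi * (- b)) / (2 * pi) - cos a * (- b))"
  proof (rule integral_FTC_atLeastAtMost)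
    show "- b \<le> b" using b by simp
    show "continuous_on {- b..b} (\<lambda>y. cos (2 * pi * y) - cos a)" by (intro continuous_intros)
    fix x :: real
    show "((\<lambda>y. sin (2 * pi * y) / (2 * pi) - cos a * y) has_vector_derivative cos (2 * pi * x) - cos a)
        (at x within {- b..b})"
      unfolding has_real_derivative_iff_has_vector_derivative[symmetric]
      by (auto intro!: derivative_eq_intros)
  qed
  also have "\<dots> = (sin a - a * cos a) / pi"
    unfolding b_def by (simp add: field_simps)
  finally show ?thesis .
qed

lemma mult_cos_le_cos_excess:
  assumes "0 \<le> y" "y \<le> M"
  shows "y * cos (2 * pi * x) \<le> M * cos_excess t x + t * y"
proof -
  have "y * (cos (2 * pi * x) - t) \<le> M * cos_excess t x"
    using assms unfolding cos_excess_def
    by (cases "cos (2 * pi * x) \<ge> t") (auto intro: mult_mono mult_nonneg_nonpos order.trans[of _ 0])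
  then show ?thesis by (simp add: algebra_simps)
qed

lemma T_fourier_bathtub_bound:
  assumes "j \<noteq> 0" and [measurable]: "h \<in> borel_measurable borel"
    and bounds: "AE x in lborel. x \<in> {0..1} \<longrightarrow> 0 \<le> h x \<and> h x \<le> M"
    and total: "(LINT x:{0..1}|lborel. h x) = 1"
  shows "cmod (T_fourier h j) \<le> M / pi * sin (pi / M)"
proof -
  have const_int: "set_integrable lborel {0..1::real} (\<lambda>_. M)"
    by (rule borel_integrable_atLeastAtMost') (rule continuous_on_const)
  have hi: "set_integrable lborel {0..1} h"
  proof (rule set_integrable_bound[OF const_int])
    show "set_borel_measurable lborel {0..1} h"
      unfolding set_borel_measurable_def by measurable
  qed (use bounds in \<open>eventually_elim, auto\<close>)
  have "(LINT x:{0..1}|lborel. h x) \<le> (LINT x:{0..1::real}|lborel. M)"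
    by (rule set_integral_mono_AE[OF hi const_int]) (use bounds in eventually_elim, auto)
  then have M: "1 \<le> M" using total by (simp add: set_integral_const)
  \<comment> \<open>\<open>cos (2\<pi>y) \<ge> cos a\<close> on a set of measure \<open>a/\<pi> = 1/M\<close>, which density \<open>M\<close> fills with mass 1\<close>
  define a where "a = pi / M"
  have a: "0 < a" "a \<le> pi" using M by (auto simp: a_def field_simps)
  obtain s where s: "cmod (T_fourier h j) = (LINT c:{0..1}|lborel. h c * cos (2 * pi * (s + of_int j * c)))"
    using cmod_T_fourier_eq_integral_cos[OF assms(2) hi] .
  have excess_int: "set_integrable lborel {0..1} (\<lambda>c. cos_excess (cos a) (s + of_int j * c))"
    by (rule periodic_set_integral_affine(1)[OF cos_excess_periodic set_integrable_cos_excess \<open>j \<noteq> 0\<close>])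
  have "cmod (T_fourier h j) \<le> (LINT c:{0..1}|lborel. M * cos_excess (cos a) (s + of_int j * c) + cos a * h c)"
    unfolding s
  proof (rule set_integral_mono_AE)
    show "set_integrable lborel {0..1} (\<lambda>c. h c * cos (2 * pi * (s + of_int j * c)))"
    proof (rule set_integrable_bound[OF hi])
      show "set_borel_measurable lborel {0..1} (\<lambda>c. h c * cos (2 * pi * (s + of_int j * c)))"
        unfolding set_borel_measurable_def by measurable
    qed (simp add: abs_mult mult_left_le)
    show "set_integrable lborel {0..1} (\<lambda>c. M * cos_excess (cos a) (s + of_int j * c) + cos a * h c)"
      using excess_int hi by (intro set_integral_add set_integrable_mult_right)
    show "AE c\<in>{0..1} in lborel. h c * cos (2 * pi * (s + of_int j * c))
        \<le> M * cos_excess (cos a) (s + of_int j * c) + cos a * h c"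
      using bounds by eventually_elim (auto intro: mult_cos_le_cos_excess)
  qed
  also have "\<dots> = M * ((sin a - a * cos a) / pi) + cos a"
    using excess_int hi total
      periodic_set_integral_affine(2)[OF cos_excess_periodic set_integrable_cos_excess \<open>j \<noteq> 0\<close>]
    by (simp add: set_integral_cos_excess[OF a])
  also have "\<dots> = M / pi * sin (pi / M)"
    using M unfolding a_def by (simp add: field_simps)
  finally show ?thesis .
qed

lemma AE_abs_le_T_sup_norm:
  assumes [measurable]: "h \<in> borel_measurable borel" and bounded: "\<And>x. \<bar>h x\<bar> \<le> B"
  shows "AE x in lborel. x \<in> {0..1} \<longrightarrow> \<bar>h x\<bar> \<le> real_of_ereal (T_sup_norm h)"
proof -
  define N where "N = restrict_space lborel {0..1::real}"
  have [measurable]: "(\<lambda>x. ereal \<bar>h x\<bar>) \<in> borel_measurable N"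
    unfolding N_def by (rule measurable_restrict_space1) measurable
  have "T_sup_norm h \<le> ereal B"
    unfolding T_sup_norm_def N_def[symmetric] by (rule esssup_I) (use bounded in auto)
  moreover have "0 \<le> T_sup_norm h"
  proof -
    have "esssup N (\<lambda>x. 0::ereal) = 0"
      by (rule esssup_const) (simp add: N_def emeasure_restrict_space)
    moreover have "esssup N (\<lambda>x. 0) \<le> esssup N (\<lambda>x. ereal \<bar>h x\<bar>)"
      by (rule esssup_mono) auto
    ultimately show ?thesis unfolding T_sup_norm_def N_def by simp
  qed
  ultimately have finite: "ereal (real_of_ereal (T_sup_norm h)) = T_sup_norm h"
    by (cases "T_sup_norm h") auto
  have "AE x in N. ereal \<bar>h x\<bar> \<le> T_sup_norm h"
    unfolding T_sup_norm_def N_def by (rule esssup_AE)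
  then have "AE x in lborel. x \<in> {0..1} \<longrightarrow> ereal \<bar>h x\<bar> \<le> T_sup_norm h"
    unfolding N_def by (subst (asm) AE_restrict_space_iff) auto
  then show ?thesis
    by eventually_elim (metis finite ereal_less_eq(3))
qed

theorem lemma2p14:
  fixes f :: "real \<Rightarrow> real" and j :: int
  assumes "T_pdf f" and "T_supported_quarter f" and "j \<noteq> 0"
  shows "(cmod (T_fourier f j))\<^sup>2
    \<le> real_of_ereal (T_sup_norm (T_conv f f)) / pi * sin (pi / real_of_ereal (T_sup_norm (T_conv f f)))"
proof -
  define M where "M = real_of_ereal (T_sup_norm (T_conv f f))"
  have per: "torus_periodic f" and [measurable]: "f \<in> borel_measurable borel"
    and nonneg: "AE x in lborel. 0 \<le> f x" and sq: "set_integrable lborel {0..1} (\<lambda>x. (f x)\<^sup>2)"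
    and int: "set_integrable lborel {0..1} f" and total: "(LINT x:{0..1}|lborel. f x) = 1"
    using assms(1) by (simp_all add: T_pdf_def)
  have fourier_conv: "T_fourier (T_conv f f) k = (T_fourier f k)\<^sup>2" for k
    using T_fourier_T_conv[OF per per _ _ int int] by (simp add: power2_eq_square)
  have "complex_of_real (LINT x:{0..1}|lborel. T_conv f f x) = (T_fourier f 0)\<^sup>2"
    using fourier_conv[of 0] by (simp add: T_fourier_def set_integral_complex_of_real)
  also have "\<dots> = 1"
    using total by (simp add: T_fourier_def set_integral_complex_of_real)
  finally have total_conv: "(LINT x:{0..1}|lborel. T_conv f f x) = 1"
    by (metis of_real_eq_1_iff)
  have "AE x in lborel. x \<in> {0..1} \<longrightarrow> \<bar>T_conv f f x\<bar> \<le> M"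
    unfolding M_def by (rule AE_abs_le_T_sup_norm) (use abs_T_conv_self_le[OF per _ sq] in auto)
  then have "AE x in lborel. x \<in> {0..1} \<longrightarrow> 0 \<le> T_conv f f x \<and> T_conv f f x \<le> M"
    using T_conv_nonneg[OF _ nonneg nonneg] by auto
  then have "cmod (T_fourier (T_conv f f) j) \<le> M / pi * sin (pi / M)"
    using T_fourier_bathtub_bound[OF assms(3) _ _ total_conv] by simp
  then show ?thesis
    unfolding M_def fourier_conv by (simp add: norm_power)
qed

end
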